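(* Under the standing setup, for every $t>0$ there exists a sequence $(\pi_n)_{n\in\mathbb N}\subset P_t$ such that $\mathcal E_{\pi_n}u_0\nearrow\mathscr S(t)u_0$ as $n\to\infty$ for all $u_0\in\mathbb R^d$.
   Context: Standing setup: $d\in\mathbb N$; vectors in $\mathbb R^d$; inequalities and suprema of vectors are componentwise; reals are identified with constant vectors. A $Q$-matrix is $q\in\mathbb R^{d\times d}$ with $q_{ii}\le0$, $q_{ij}\ge0$ ($i\ne j$), $\sum_jq_{ij}=0$. Let $\mathcal P$ be a set of $Q$-matrices and $f=(f_q)_{q\in\mathcal P}\subset\mathbb R^d$ with $\sup_{q\in\mathcal P}f_q=f_{q_0}=0$ for some $q_0\in\mathcal P$, such that $\mathcal Qu:=\sup_{q\in\mathcal P}(qu+f_q)$ is finite for every $u\in\mathbb R^d$. For $q\in\mathcal P$, $t\ge0$: $S_q(t)u_0:=e^{tq}u_0+\int_0^te^{sq}f_q\,ds$. For $h\ge0$: $\mathcal E_hu_0:=\sup_{q\in\mathcal P}S_q(h)u_0$. $P$ is the set of finite subsets $\pi\subset[0,\infty)$ with $0\in\pi$; $P_t:=\{\pi\in P:\max\pi=t\}$. For $\pi=\{t_0,\dots,t_m\}$ with $0=t_0<\dots<t_m$, $m\ge1$, $\mathcal E_\pi:=\mathcal E_{t_1-t_0}\circ\cdots\circ\mathcal E_{t_m-t_{m-1}}$, and $\mathcal E_{\{0\}}:=\mathcal E_0$. The Nisio semigroup of $(\mathcal P,f)$ is $\mathscr S(t)u_0:=\sup_{\pi\in P_t}\mathcal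 E_\pi u_0$. *)

theory Defs
  imports "HOL-Analysis.Analysis"
begin

text \<open>Order and Sup on vectors are componentwise
  (library instances).\<close>

definition qmatrix :: "real^'d^'d \<Rightarrow> bool" where
  "qmatrix q \<longleftrightarrow> (\<forall>i. q$i$i \<le> 0) \<and> (\<forall>i j. i \<noteq> j \<longrightarrow> q$i$j \<ge> 0)
     \<and> (\<forall>i. (\<Sum>j\<in>UNIV. q$i$j) = 0)"

fun mpow :: "real^'d^'d \<Rightarrow> nat \<Rightarrow> real^'d^'d" where
  "mpow q 0 = mat 1"
| "mpow q (Suc k) = q ** mpow q k"

definition mexp :: "real^'d^'d \<Rightarrow> real^'d^'d" where
  "mexp A = (\<Sum>k. (1 / fact k) *\<^sub>R mpow A k)"

definition Sq :: "real^'d^'d \<Rightarrow> real^'d \<Rightarrow> real \<Rightarrow> real^'d \<Rightarrow> real^'d" where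
  "Sq q fq t u0 = mexp (t *\<^sub>R q) *v u0 + integral {0..t} (\<lambda>s. mexp (s *\<^sub>R q) *v fq)"

definition Eh :: "(real^'d^'d) set \<Rightarrow> (real^'d^'d \<Rightarrow> real^'d) \<Rightarrow> real \<Rightarrow> real^'d \<Rightarrow> real^'d" where
  "Eh P f h u0 = (SUP q\<in>P. Sq q (f q) h u0)"

fun Elist :: "(real^'d^'d) set \<Rightarrow> (real^'d^'d \<Rightarrow> real^'d) \<Rightarrow> real list \<Rightarrow> real^'d \<Rightarrow> real^'d" where
  "Elist P f (a # b # rest) u0 = Eh P f (b - a) (Elist P f (b # rest) u0)"
| "Elist P f _ u0 = u0"

definition partitions :: "real set set" where
  "partitions = {\<pi>. finite \<pi> \<and> \<pi> \<subseteq> {0..} \<and> 0 \<in> \<pi>}"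

definition partitions_t :: "real \<Rightarrow> real set set" where
  "partitions_t t = {\<pi> \<in> partitions. Max \<pi> = t}"

definition Epi :: "(real^'d^'d) set \<Rightarrow> (real^'d^'d \<Rightarrow> real^'d) \<Rightarrow> real set \<Rightarrow> real^'d \<Rightarrow> real^'d" where
  "Epi P f \<pi> u0 = (if \<pi> = {0} then Eh P f 0 u0 else Elist P f (sorted_list_of_set \<pi>) u0)"

definition Nisio :: "(real^'d^'d) set \<Rightarrow> (real^'d^'d \<Rightarrow> real^'d) \<Rightarrow> real \<Rightarrow> real^'d \<Rightarrow> real^'d" where
  "Nisio P f t u0 = (SUP \<pi>\<in>partitions_t t. Epi P f \<pi> u0)"

end

theory Submission
  imports Defs
begin

text \<open>
  For a Q-matrix q, exp (h q) is entrywise nonnegative and fixes constant vectors, and f_q \<le> 0;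
  hence every S_q(h), and with it every E_\<pi>, is monotone and satisfies u \<le> v + c \<Longrightarrow>
  E_\<pi> u \<le> E_\<pi> v + c, i.e. it is 1-Lipschitz for the sup norm. The semigroup law
  S_q(a + b) = S_q(a) \<circ> S_q(b) gives E_(a+b) \<le> E_a \<circ> E_b, so refining a partition increases E_\<pi>.
  Consequently one partition approximates the componentwise supremum in every component.
  Approximating at the points of a countable dense set with accuracy 1/(k+1), and taking
  cumulative unions of these countably many partitions, yields an increasing chain whose
  E_\<pi> converge to the Nisio semigroup on the dense set, hence everywhere by the Lipschitz bound.
\<close>

lemma matrix_add_rdistrib: "((A::'a::semiring_1^'n^'m) + B) ** C = A ** C + B ** C"
  by (vector matrix_matrix_mult_def sum.distrib[symmetric] field_simps)

lemma matrix_mul_sum_right: "(A::'a::semiring_1^'n^'m) ** (\<Sum>k\<in>K. X k) = (\<Sum>k\<in>K. A ** X k)"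
  by (induct K rule: infinite_finite_induct) (auto simp: matrix_add_ldistrib)

lemma mpow_commute:
  assumes "A ** B = B ** A"
  shows "mpow A n ** B = B ** mpow A n"
proof (induction n)
  case (Suc n)
  have "mpow A (Suc n) ** B = A ** (mpow A n ** B)" by (simp add: matrix_mul_assoc)
  also have "\<dots> = (A ** B) ** mpow A n" by (simp add: Suc matrix_mul_assoc)
  finally show ?case by (simp add: assms matrix_mul_assoc)
qed simp

lemma mpow_Suc_right: "mpow A (Suc n) = mpow A n ** A"
  using mpow_commute[of A A n] by simp

lemma mpow_scaleR: "mpow (s *\<^sub>R A) k = s ^ k *\<^sub>R mpow A k"
  by (induction k) (simp_all add: matrix_scalar_ac scalar_matrix_assoc[symmetric])

lemma mpow_mat_1: "mpow (mat 1) k = mat 1"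
  by (induction k) simp_all

lemma mpow_nonneg: "(\<And>i j. 0 \<le> A$i$j) \<Longrightarrow> 0 \<le> mpow A k $ i $ j"
  by (induction k arbitrary: i j) (auto simp: mat_def matrix_matrix_mult_def intro!: sum_nonneg)

lemma sum_choose_scaleR_Suc:
  fixes X :: "nat \<Rightarrow> nat \<Rightarrow> 'a::real_vector"
  shows "(\<Sum>k\<le>n. real (n choose k) *\<^sub>R X (Suc k) (n - k))
       + (\<Sum>k\<le>n. real (n choose k) *\<^sub>R X k (Suc n - k))
     = (\<Sum>k\<le>Suc n. real (Suc n choose k) *\<^sub>R X k (Suc n - k))"
proof -
  define g where "g k = real (n choose k) *\<^sub>R X k (Suc n - k)" for k
  have "(\<Sum>k\<le>n. g k) = (\<Sum>k\<le>Suc n. g k)"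
    by (simp add: g_def)
  also have "\<dots> = g 0 + (\<Sum>k\<le>n. g (Suc k))"
    by (rule sum.atMost_Suc_shift)
  finally have g_shift: "(\<Sum>k\<le>n. g k) = g 0 + (\<Sum>k\<le>n. g (Suc k))" .
  have "(\<Sum>k\<le>Suc n. real (Suc n choose k) *\<^sub>R X k (Suc n - k))
      = X 0 (Suc n) + (\<Sum>k\<le>n. real (Suc n choose Suc k) *\<^sub>R X (Suc k) (n - k))"
    by (subst sum.atMost_Suc_shift) simp
  also have "\<dots> = X 0 (Suc n) + (\<Sum>k\<le>n. real (n choose k) *\<^sub>R X (Suc k) (n - k))
       + (\<Sum>k\<le>n. g (Suc k))"
    by (simp add: g_def sum.distrib scaleR_add_left algebra_simps)
  finally show ?thesis
    using g_shift by (simp add: g_def algebra_simps)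
qed

lemma mpow_add_binomial:
  assumes AB: "A ** B = B ** A"
  shows "mpow (A + B) N = (\<Sum>n\<le>N. real (N choose n) *\<^sub>R (mpow A n ** mpow B (N - n)))"
proof (induction N)
  case (Suc N)
  define X where "X n m = mpow A n ** mpow B m" for n m
  have XA: "A ** X n m = X (Suc n) m" for n m by (simp add: X_def matrix_mul_assoc)
  have XB: "B ** X n m = X n (Suc m)" for n m
    by (simp add: X_def matrix_mul_assoc mpow_commute[OF AB])
  have "mpow (A + B) (Suc N) = A ** mpow (A + B) N + B ** mpow (A + B) N"
    by (simp add: matrix_add_rdistrib)
  also have "\<dots> = (\<Sum>k\<le>N. real (N choose k) *\<^sub>R X (Suc k) (N - k))
                 + (\<Sum>k\<le>N. real (N choose k) *\<^sub>R X k (Suc N - k))"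
    unfolding Suc
    by (auto simp add: matrix_mul_sum_right matrix_scalar_ac scalar_matrix_assoc[symmetric] XA XB Suc_diff_le
        simp flip: X_def intro!: sum.cong arg_cong2[where f="(+)"])
  also have "\<dots> = (\<Sum>k\<le>Suc N. real (Suc N choose k) *\<^sub>R X k (Suc N - k))"
    by (rule sum_choose_scaleR_Suc)
  finally show ?case by (simp add: X_def)
qed simp

definition entry_l1_norm :: "real^'n^'m \<Rightarrow> real" where
  "entry_l1_norm A = (\<Sum>i\<in>UNIV. \<Sum>j\<in>UNIV. \<bar>A$i$j\<bar>)"

lemma entry_l1_norm_nonneg: "0 \<le> entry_l1_norm A"
  unfolding entry_l1_norm_def by (intro sum_nonneg) auto

lemma norm_le_entry_l1_norm: "norm A \<le> entry_l1_norm A"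
proof -
  have "norm A \<le> (\<Sum>i\<in>UNIV. norm (A$i))"
    unfolding norm_vec_def by (rule L2_set_le_sum) auto
  also have "\<dots> \<le> entry_l1_norm A"
    unfolding entry_l1_norm_def by (rule sum_mono) (rule norm_le_l1_cart)
  finally show ?thesis .
qed

lemma abs_mpow_entry_le: "\<bar>mpow A k $ i $ j\<bar> \<le> entry_l1_norm A ^ k"
proof (induction k arbitrary: i j)
  case 0
  then show ?case by (simp add: mat_def)
next
  case (Suc k)
  have row: "(\<Sum>l\<in>UNIV. \<bar>A$i$l\<bar>) \<le> entry_l1_norm A"
    unfolding entry_l1_norm_def
    by (rule member_le_sum[where f="\<lambda>i. \<Sum>l\<in>UNIV. \<bar>A$i$l\<bar>"]) (auto intro: sum_nonneg)
  have "\<bar>mpow A (Suc k) $ i $ j\<bar> = \<bar>\<Sum>l\<in>UNIV. A$i$l * mpow A k $ l $ j\<bar>"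
    by (simp add: matrix_matrix_mult_def)
  also have "\<dots> \<le> (\<Sum>l\<in>UNIV. \<bar>A$i$l\<bar>) * entry_l1_norm A ^ k"
    unfolding sum_distrib_right
    by (rule order_trans[OF sum_abs sum_mono]) (simp add: abs_mult Suc mult_left_mono)
  also have "\<dots> \<le> entry_l1_norm A * entry_l1_norm A ^ k"
    by (rule mult_right_mono[OF row]) (simp add: entry_l1_norm_nonneg)
  finally show ?case by simp
qed

lemma summable_power_div_fact: "summable (\<lambda>k. (x::real) ^ k / fact k)"
  using summable_exp_generic[of x] by (simp add: divide_inverse mult.commute)

lemma mexp_summable: "summable (\<lambda>k. (1 / fact k) *\<^sub>R mpow (A::real^'n^'n) k)"
proof (rule summable_norm_cancel, rule summable_comparison_test)
  define C where "C = real (CARD('n) * CARD('n))"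
  show "summable (\<lambda>k. C * (entry_l1_norm A ^ k / fact k))"
    by (intro summable_mult summable_power_div_fact)
  have "norm (mpow A k) \<le> C * entry_l1_norm A ^ k" for k
  proof -
    have "entry_l1_norm (mpow A k) \<le> (\<Sum>i\<in>(UNIV::'n set). \<Sum>j\<in>(UNIV::'n set). entry_l1_norm A ^ k)"
      unfolding entry_l1_norm_def[of "mpow A k"] by (intro sum_mono abs_mpow_entry_le)
    then show ?thesis using norm_le_entry_l1_norm[of "mpow A k"] by (simp add: C_def)
  qed
  then show "\<exists>N. \<forall>k\<ge>N. norm (norm ((1 / fact k) *\<^sub>R mpow A k)) \<le> C * (entry_l1_norm A ^ k / fact k)"
    by (auto simp: divide_simps mult.commute)
qed

lemma mexp_sums: "(\<lambda>k. (1 / fact k) *\<^sub>R mpow A k) sums mexp A"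
  unfolding mexp_def by (rule summable_sums[OF mexp_summable])

lemma mexp_entry_sums: "(\<lambda>k. (1 / fact k) * mpow A k $ i $ j) sums (mexp A $ i $ j)"
  using sums_vec_nth[OF sums_vec_nth[OF mexp_sums[of A]], of i j] by simp

lemma mexp_entry: "mexp A $ i $ j = (\<Sum>k. (1 / fact k) * mpow A k $ i $ j)"
  by (rule sums_unique[OF mexp_entry_sums])

lemma mexp_entry_summable_abs: "summable (\<lambda>k. \<bar>(1 / fact k) * mpow A k $ i $ j\<bar>)"
  by (rule summable_comparison_test[OF _ summable_power_div_fact[of "entry_l1_norm A"]])
     (use abs_mpow_entry_le[of A _ i j] in \<open>auto simp: abs_mult divide_simps\<close>)

text \<open>Entrywise, a product of two exponentials is a finite sum of Cauchy products of absolutely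
  convergent series; the binomial expansion of \<open>mpow (A + B)\<close> identifies it with \<open>mexp (A + B)\<close>.\<close>

lemma mexp_add:
  assumes AB: "A ** B = B ** A"
  shows "mexp (A + B) = mexp A ** mexp B"
proof -
  have "mexp (A + B) $ i $ j = (mexp A ** mexp B) $ i $ j" for i j
  proof -
    define a where "a l k = (1 / fact k) * mpow A k $ i $ l" for l k
    define b where "b l k = (1 / fact k) * mpow B k $ l $ j" for l k
    define c where "c l k = (\<Sum>n\<le>k. a l n * b l (k - n))" for l k
    have sa: "summable (\<lambda>k. norm (a l k))" and sb: "summable (\<lambda>k. norm (b l k))" for l
      using mexp_entry_summable_abs[of A i l] mexp_entry_summable_abs[of B l j]
      by (simp_all add: a_def b_def)
    have "mexp A $ i $ l * mexp B $ l $ j = suminf (c l)" for l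
      unfolding c_def mexp_entry a_def[symmetric] b_def[symmetric]
      by (rule Cauchy_product[OF sa sb])
    then have "(mexp A ** mexp B) $ i $ j = (\<Sum>l\<in>UNIV. suminf (c l))"
      by (simp add: matrix_matrix_mult_def)
    also have "\<dots> = (\<Sum>k. \<Sum>l\<in>UNIV. c l k)"
      by (rule suminf_sum[symmetric]) (unfold c_def, rule summable_Cauchy_product[OF sa sb])
    also have "\<dots> = (\<Sum>k. (1 / fact k) * mpow (A + B) k $ i $ j)"
    proof (rule suminf_cong)
      fix k
      have coeff: "(1 / fact k) * real (k choose n) = 1 / (fact n * fact (k - n))" if "n \<le> k" for n
        using binomial_fact[OF that, where 'a=real] by (simp add: field_simps)
      have "(1 / fact k) * mpow (A + B) k $ i $ j
          = (\<Sum>n\<le>k. (1 / fact k) * real (k choose n)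
               * (\<Sum>l\<in>UNIV. mpow A n $ i $ l * mpow B (k - n) $ l $ j))"
        by (simp add: mpow_add_binomial[OF AB] matrix_matrix_mult_def sum_distrib_left mult.assoc)
      also have "\<dots> = (\<Sum>n\<le>k. \<Sum>l\<in>UNIV. a l n * b l (k - n))"
      proof (intro sum.cong refl)
        fix n assume "n \<in> {..k}"
        then have nk: "n \<le> k" by simp
        show "(1 / fact k) * real (k choose n)
               * (\<Sum>l\<in>UNIV. mpow A n $ i $ l * mpow B (k - n) $ l $ j)
            = (\<Sum>l\<in>UNIV. a l n * b l (k - n))"
          unfolding coeff[OF nk] sum_distrib_left a_def b_def by (intro sum.cong refl) simp
      qed
      also have "\<dots> = (\<Sum>l\<in>UNIV. c l k)"
        unfolding c_def by (rule sum.swap)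
      finally show "(\<Sum>l\<in>UNIV. c l k) = (1 / fact k) * mpow (A + B) k $ i $ j" by simp
    qed
    finally show ?thesis by (simp add: mexp_entry)
  qed
  then show ?thesis by (simp add: vec_eq_iff)
qed

lemma mexp_add_scaleR: "mexp ((a + b) *\<^sub>R A) = mexp (a *\<^sub>R A) ** mexp (b *\<^sub>R A)"
proof -
  have "(a *\<^sub>R A) ** (b *\<^sub>R A) = (b *\<^sub>R A) ** (a *\<^sub>R A)"
    by (simp add: matrix_scalar_ac scalar_matrix_assoc[symmetric])
  from mexp_add[OF this] show ?thesis by (simp add: scaleR_add_left)
qed

lemma mexp_scaleR_mat_1: "mexp (c *\<^sub>R mat 1) = exp c *\<^sub>R (mat 1 :: real^'n^'n)"
proof -
  have "(\<lambda>k. (1 / fact k) *\<^sub>R mpow (c *\<^sub>R (mat 1 :: real^'n^'n)) k) sums (exp c *\<^sub>R mat 1)"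
    using sums_scaleR_left[OF exp_converges[of c], of "mat 1 :: real^'n^'n"]
    by (simp add: mpow_scaleR mpow_mat_1 divide_inverse mult.commute)
  from sums_unique2[OF mexp_sums this] show ?thesis .
qed

lemma mexp_nonneg: "(\<And>i j. 0 \<le> A$i$j) \<Longrightarrow> 0 \<le> mexp A $ i $ j"
  unfolding mexp_entry
  by (rule suminf_nonneg[OF sums_summable[OF mexp_entry_sums]]) (simp add: mpow_nonneg)

lemma mexp_mult_vector_sums:
  fixes A :: "real^'n^'n"
  shows "(\<lambda>k. ((1 / fact k) *\<^sub>R mpow A k) *v v) sums (mexp A *v v)"
proof -
  have "bounded_linear (\<lambda>A::real^'n^'n. A *v v)"
    by (rule linearI[THEN linear_conv_bounded_linear[THEN iffD1]])
       (simp_all add: matrix_vector_mult_add_rdistrib scaleR_matrix_vector_assoc)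
  from bounded_linear.sums[OF this mexp_sums[of A]] show ?thesis .
qed

lemma continuous_on_mexp_scaleR_mult_vector: "continuous_on S (\<lambda>s. mexp (s *\<^sub>R A) *v v)"
proof -
  have entry_sums: "(\<lambda>k. (mpow A k $ i $ j / fact k) * s ^ k) sums (mexp (s *\<^sub>R A) $ i $ j)" for i j s
    using mexp_entry_sums[of "s *\<^sub>R A" i j] by (simp add: mpow_scaleR mult_ac)
  have "isCont (\<lambda>s. mexp (s *\<^sub>R A) $ i $ j) s" for i j s
  proof -
    have "isCont (\<lambda>x. \<Sum>k. (mpow A k $ i $ j / fact k) * x ^ k) s"
      by (rule isCont_powser_converges_everywhere) (use entry_sums sums_summable in blast)
    then show ?thesis by (simp add: sums_unique[OF entry_sums])
  qed
  then show ?thesis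
    unfolding matrix_vector_mult_def
    by (intro continuous_on_vec_lambda continuous_on_sum continuous_on_mult continuous_on_const
        continuous_at_imp_continuous_on ballI)
qed

lemma qmatrix_mult_vec: "qmatrix q \<Longrightarrow> q *v vec c = 0"
  by (simp add: qmatrix_def matrix_vector_mult_def vec_eq_iff sum_distrib_right[symmetric])

text \<open>For a Q-matrix q, r = q + \<mu> I is entrywise nonnegative once \<mu> dominates the diagonal,
  and exp (h q) = exp (- h \<mu>) exp (h r) because the two summands commute.\<close>

lemma mexp_qmatrix_nonneg:
  assumes q: "qmatrix q" and h: "0 \<le> h"
  shows "0 \<le> mexp (h *\<^sub>R q) $ i $ j"
proof -
  define \<mu> where "\<mu> = entry_l1_norm q"
  define r where "r = q + \<mu> *\<^sub>R mat 1"
  have r_nonneg: "0 \<le> r $ i $ j" for i j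
  proof (cases "i = j")
    case True
    have "\<bar>q $ j $ j\<bar> \<le> \<mu>"
      using abs_mpow_entry_le[of q 1 j j] by (simp add: \<mu>_def)
    with True show ?thesis by (simp add: r_def mat_def)
  next
    case False
    then show ?thesis using q by (simp add: r_def mat_def qmatrix_def)
  qed
  define c where "c = - h * \<mu>"
  have decomp: "h *\<^sub>R q = h *\<^sub>R r + c *\<^sub>R mat 1"
    by (simp add: r_def c_def algebra_simps)
  have commute: "(h *\<^sub>R r) ** (c *\<^sub>R mat 1) = (c *\<^sub>R mat 1) ** (h *\<^sub>R r)"
    by (simp add: matrix_scalar_ac scalar_matrix_assoc[symmetric])
  have "mexp (h *\<^sub>R q) = exp c *\<^sub>R mexp (h *\<^sub>R r)"
    unfolding decomp mexp_add[OF commute] mexp_scaleR_mat_1 by (simp add: matrix_scalar_ac)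
  moreover have "0 \<le> mexp (h *\<^sub>R r) $ i $ j"
    by (rule mexp_nonneg) (simp add: h r_nonneg)
  ultimately show ?thesis by simp
qed

lemma mexp_qmatrix_mult_vec:
  assumes q: "qmatrix q"
  shows "mexp (h *\<^sub>R q) *v vec c = vec c"
proof -
  have "mpow (h *\<^sub>R q) (Suc k) *v vec c = mpow (h *\<^sub>R q) k *v (h *\<^sub>R (q *v vec c))" for k
    by (simp only: mpow_Suc_right matrix_vector_mul_assoc scaleR_matrix_vector_assoc)
  then have "mpow (h *\<^sub>R q) (Suc k) *v vec c = 0" for k
    by (simp add: qmatrix_mult_vec[OF q])
  then have "((1 / fact k) *\<^sub>R mpow (h *\<^sub>R q) k) *v vec c = (if k = 0 then vec c else 0)" for k
    by (cases k) (simp_all add: scaleR_matrix_vector_assoc[symmetric])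
  then have "(\<lambda>k. if k = 0 then vec c else 0) sums (mexp (h *\<^sub>R q) *v vec c)"
    using mexp_mult_vector_sums[of "h *\<^sub>R q" "vec c"] by simp
  moreover have "(\<lambda>k. if k = 0 then vec c else 0) sums (vec c :: real^'n)"
    using sums_single[of 0 "\<lambda>_. vec c :: real^'n"] by simp
  ultimately show ?thesis by (rule sums_unique2)
qed

lemma mult_vector_mono:
  assumes "\<And>i j. 0 \<le> M $ i $ j" and "u \<le> v"
  shows "M *v u \<le> (M::real^'n^'m) *v v"
  using assms unfolding less_eq_vec_def matrix_vector_mult_def
  by (auto intro!: sum_mono mult_left_mono)

lemma integrable_mexp_scaleR_mult_vector: "(\<lambda>s. mexp (s *\<^sub>R A) *v v) integrable_on {a..b}"
  by (rule integrable_continuous_interval) (rule continuous_on_mexp_scaleR_mult_vector)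

lemma integral_mexp_qmatrix_nonpos:
  assumes q: "qmatrix q" and fq: "fq \<le> 0"
  shows "integral {0..h} (\<lambda>s. mexp (s *\<^sub>R q) *v fq) \<le> 0"
proof -
  have "integral {0..h} (\<lambda>s. (mexp (s *\<^sub>R q) *v fq) $ i) \<le> integral {0..h} (\<lambda>s. 0)" for i
  proof (rule integral_le)
    show "(\<lambda>s. (mexp (s *\<^sub>R q) *v fq) $ i) integrable_on {0..h}"
      using integrable_linear[OF integrable_mexp_scaleR_mult_vector bounded_linear_vec_nth[of i]]
      by (simp add: o_def)
    fix s assume "s \<in> {0..h}"
    then have "mexp (s *\<^sub>R q) *v fq \<le> mexp (s *\<^sub>R q) *v 0"
      by (intro mult_vector_mono mexp_qmatrix_nonneg[OF q] fq) auto
    then show "(mexp (s *\<^sub>R q) *v fq) $ i \<le> 0" by (simp add: less_eq_vec_def)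
  qed (rule integrable_0)
  then show ?thesis
    by (simp add: less_eq_vec_def integral_component_eq_cart[OF integrable_mexp_scaleR_mult_vector])
qed

lemma Sq_mono:
  assumes "qmatrix q" "0 \<le> h" "u \<le> v"
  shows "Sq q fq h u \<le> Sq q fq h v"
  unfolding Sq_def using mult_vector_mono[OF mexp_qmatrix_nonneg[OF assms(1,2)] assms(3)] by simp

lemma Sq_add_vec:
  assumes "qmatrix q"
  shows "Sq q fq h (v + vec c) = Sq q fq h v + vec c"
  unfolding Sq_def by (simp add: matrix_vector_right_distrib mexp_qmatrix_mult_vec[OF assms])

lemma Sq_le_vec:
  assumes q: "qmatrix q" and fq: "fq \<le> 0" and h: "0 \<le> h" and u: "u \<le> vec c"
  shows "Sq q fq h u \<le> vec c"
proof -
  have "Sq q fq h u \<le> Sq q fq h (vec c)" by (rule Sq_mono[OF q h u])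
  also have "\<dots> = vec c + integral {0..h} (\<lambda>s. mexp (s *\<^sub>R q) *v fq)"
    unfolding Sq_def by (simp add: mexp_qmatrix_mult_vec[OF q])
  also have "\<dots> \<le> vec c" using integral_mexp_qmatrix_nonpos[OF q fq] by simp
  finally show ?thesis .
qed

text \<open>exp (a q) maps the integral over [0, b] to the integral over [a, a + b].\<close>

lemma Sq_add:
  assumes a: "0 \<le> a" and b: "0 \<le> b"
  shows "Sq q fq (a + b) u = Sq q fq a (Sq q fq b u)"
proof -
  let ?M = "\<lambda>s. mexp (s *\<^sub>R q)"
  let ?g = "\<lambda>s. ?M s *v fq"
  have "?M a *v integral {0..b} ?g = integral {0..b} (\<lambda>s. ?M a *v ?g s)"
    using integral_linear[OF integrable_mexp_scaleR_mult_vector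
        matrix_vector_mul_bounded_linear[of "?M a"]]
    by (simp add: o_def)
  also have "\<dots> = integral {0..b} (?g \<circ> (+) a)"
    by (simp add: o_def matrix_vector_mul_assoc mexp_add_scaleR)
  also have "\<dots> = integral {a..a + b} ?g"
    using integral_shift_Icc_real[of 0 b ?g a] by (simp add: add.commute)
  finally have shifted: "?M a *v integral {0..b} ?g = integral {a..a + b} ?g" .
  have split: "integral {0..a} ?g + integral {a..a + b} ?g = integral {0..a + b} ?g"
    by (rule Henstock_Kurzweil_Integration.integral_combine)
       (use a b integrable_mexp_scaleR_mult_vector in auto)
  show ?thesis
    unfolding Sq_def
    by (simp add: matrix_vector_right_distrib matrix_vector_mul_assoc mexp_add_scaleR shifted
        split[symmetric] algebra_simps del: scaleR_add_left)
qed

lemma partitions_tD: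
  assumes "\<pi> \<in> partitions_t t"
  shows "finite \<pi>" "0 \<in> \<pi>" "t \<in> \<pi>" "\<pi> \<subseteq> {0..t}"
proof -
  show fin: "finite \<pi>" and zero: "0 \<in> \<pi>"
    using assms by (auto simp: partitions_t_def partitions_def)
  have "Max \<pi> = t" "\<pi> \<subseteq> {0..}"
    using assms by (auto simp: partitions_t_def partitions_def)
  then show "t \<in> \<pi>" "\<pi> \<subseteq> {0..t}"
    using Max_in[OF fin] Max_ge[OF fin] zero by auto
qed

lemma partitions_tI:
  assumes "finite \<pi>" "\<pi> \<subseteq> {0..t}" "0 \<in> \<pi>" "t \<in> \<pi>"
  shows "\<pi> \<in> partitions_t t"
  using assms unfolding partitions_t_def partitions_def by (auto intro!: Max_eqI)

lemma sorted_list_of_set_Cons_0: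
  assumes "finite X" "0 \<in> X" "X \<subseteq> {0..}"
  shows "sorted_list_of_set X = (0::real) # sorted_list_of_set (X - {0})"
proof -
  have "Min X = 0" using assms by (intro Min_eqI) auto
  then show ?thesis using sorted_list_of_set_nonempty[of X] assms by auto
qed

lemma exists_chain_partitions_t:
  assumes "countable C" "C \<noteq> {}" "C \<subseteq> partitions_t t"
  shows "\<exists>\<pi>s. (\<forall>n. \<pi>s n \<in> partitions_t t) \<and> incseq \<pi>s \<and> (\<forall>\<pi>\<in>C. \<exists>n. \<pi> \<subseteq> \<pi>s n)"
proof -
  define \<pi>s where "\<pi>s n = (\<Union>m\<le>n. from_nat_into C m)" for n
  have parts: "from_nat_into C m \<in> partitions_t t" for m
    using from_nat_into[OF assms(2)] assms(3) by blast
  have "\<pi>s n \<in> partitions_t t" for n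
    unfolding \<pi>s_def using partitions_tD[OF parts] by (intro partitions_tI) force+
  moreover have "incseq \<pi>s"
    unfolding \<pi>s_def by (intro monoI UN_mono) auto
  moreover have "\<exists>n. \<pi> \<subseteq> \<pi>s n" if "\<pi> \<in> C" for \<pi>
    using from_nat_into_surj[OF assms(1) that] unfolding \<pi>s_def by blast
  ultimately show ?thesis by blast
qed

lemma le_add_vec_if_norm_diff_le:
  assumes "norm ((u::real^'n) - v) \<le> c"
  shows "u \<le> v + vec c"
proof -
  have "u $ i - v $ i \<le> c" for i
    using component_le_norm_cart[of "u - v" i] assms by simp
  then show ?thesis by (simp add: less_eq_vec_def algebra_simps)
qed

lemma le_vec_Max: "(u::real^'n) \<le> vec (Max (range (($) u)))"
  by (auto simp: less_eq_vec_def intro: Max_ge)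

locale nisio_setting =
  fixes P :: "(real^'d^'d) set" and f :: "real^'d^'d \<Rightarrow> real^'d"
  assumes P_qmatrix: "\<And>q. q \<in> P \<Longrightarrow> qmatrix q"
    and P_nonempty: "P \<noteq> {}"
    and f_nonpos: "\<And>q. q \<in> P \<Longrightarrow> f q \<le> 0"
begin

lemma Eh_upper: "0 \<le> h \<Longrightarrow> q \<in> P \<Longrightarrow> Sq q (f q) h u \<le> Eh P f h u"
  unfolding Eh_def
  by (rule cSUP_upper, assumption, rule bdd_aboveI[where M="vec (Max (range (($) u)))"])
     (auto intro: Sq_le_vec P_qmatrix f_nonpos le_vec_Max)

lemma Eh_least: "(\<And>q. q \<in> P \<Longrightarrow> Sq q (f q) h u \<le> w) \<Longrightarrow> Eh P f h u \<le> w"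
  unfolding Eh_def by (rule cSUP_least[OF P_nonempty])

lemma Eh_mono: "0 \<le> h \<Longrightarrow> u \<le> v \<Longrightarrow> Eh P f h u \<le> Eh P f h v"
  by (rule Eh_least) (meson Eh_upper P_qmatrix Sq_mono order_trans)

lemma Eh_le_vec: "0 \<le> h \<Longrightarrow> u \<le> vec c \<Longrightarrow> Eh P f h u \<le> vec c"
  by (rule Eh_least) (auto intro: Sq_le_vec P_qmatrix f_nonpos)

lemma Eh_le_add_vec: "0 \<le> h \<Longrightarrow> u \<le> v + vec c \<Longrightarrow> Eh P f h u \<le> Eh P f h v + vec c"
proof (rule Eh_least)
  fix q assume h: "0 \<le> h" and uv: "u \<le> v + vec c" and q: "q \<in> P"
  have "Sq q (f q) h u \<le> Sq q (f q) h (v + vec c)" by (rule Sq_mono[OF P_qmatrix[OF q] h uv])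
  also have "\<dots> = Sq q (f q) h v + vec c" by (rule Sq_add_vec[OF P_qmatrix[OF q]])
  also have "\<dots> \<le> Eh P f h v + vec c" using Eh_upper[OF h q] by simp
  finally show "Sq q (f q) h u \<le> Eh P f h v + vec c" .
qed

lemma Eh_add_le: "0 \<le> a \<Longrightarrow> 0 \<le> b \<Longrightarrow> Eh P f (a + b) u \<le> Eh P f a (Eh P f b u)"
proof (rule Eh_least)
  fix q assume a: "0 \<le> a" and b: "0 \<le> b" and q: "q \<in> P"
  have "Sq q (f q) (a + b) u = Sq q (f q) a (Sq q (f q) b u)" by (rule Sq_add[OF a b])
  also have "\<dots> \<le> Sq q (f q) a (Eh P f b u)" by (rule Sq_mono[OF P_qmatrix[OF q] a Eh_upper[OF b q]])
  also have "\<dots> \<le> Eh P f a (Eh P f b u)" by (rule Eh_upper[OF a q])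
  finally show "Sq q (f q) (a + b) u \<le> Eh P f a (Eh P f b u)" .
qed

lemma Elist_mono: "sorted xs \<Longrightarrow> u \<le> v \<Longrightarrow> Elist P f xs u \<le> Elist P f xs v"
  by (induction xs rule: induct_list012) (auto intro: Eh_mono)

lemma Elist_le_vec: "sorted xs \<Longrightarrow> u \<le> vec c \<Longrightarrow> Elist P f xs u \<le> vec c"
  by (induction xs rule: induct_list012) (auto intro: Eh_le_vec)

lemma Elist_le_add_vec: "sorted xs \<Longrightarrow> u \<le> v + vec c \<Longrightarrow> Elist P f xs u \<le> Elist P f xs v + vec c"
  by (induction xs rule: induct_list012) (auto intro: Eh_le_add_vec)

text \<open>Inserting s with a < s \<le> b replaces E_(b-a) by E_(s-a) \<circ> E_(b-s), which is larger by
  \<open>Eh_add_le\<close>.\<close>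

lemma Elist_le_insort:
  "sorted (a # xs) \<Longrightarrow> a < s \<Longrightarrow> (\<exists>y\<in>set xs. s < y) \<Longrightarrow>
   Elist P f (a # xs) u \<le> Elist P f (insort s (a # xs)) u"
proof (induction xs arbitrary: a)
  case (Cons b xs)
  show ?case
  proof (cases "s \<le> b")
    case True
    have "Elist P f (a # b # xs) u = Eh P f ((s - a) + (b - s)) (Elist P f (b # xs) u)" by simp
    also have "\<dots> \<le> Eh P f (s - a) (Eh P f (b - s) (Elist P f (b # xs) u))"
      by (rule Eh_add_le) (use Cons.prems True in auto)
    finally show ?thesis using True Cons.prems by simp
  next
    case False
    then have "Elist P f (b # xs) u \<le> Elist P f (insort s (b # xs)) u"
      using Cons.IH[of b] Cons.prems by auto
    then have "Eh P f (b - a) (Elist P f (b # xs) u) \<le> Eh P f (b - a) (Elist P f (b # insort s xs) u)"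
      using False Cons.prems by (intro Eh_mono) auto
    then show ?thesis using False Cons.prems by auto
  qed
qed simp

lemma Epi_eq_Elist: "\<pi> \<in> partitions_t t \<Longrightarrow> 0 < t \<Longrightarrow> Epi P f \<pi> u = Elist P f (sorted_list_of_set \<pi>) u"
  unfolding Epi_def using partitions_tD(3)[of \<pi> t] by auto

lemma Elist_le_union:
  assumes \<pi>: "\<pi> \<in> partitions_t t" and F: "finite F" "F \<subseteq> {0<..<t}"
  shows "Elist P f (sorted_list_of_set \<pi>) u \<le> Elist P f (sorted_list_of_set (\<pi> \<union> F)) u"
  using F
proof (induction F rule: finite_induct)
  case (insert s F)
  define X where "X = \<pi> \<union> F"
  have X: "finite X" "0 \<in> X" "X \<subseteq> {0..}" "t \<in> X"
    using partitions_tD[OF \<pi>] insert.hyps insert.prems by (auto simp: X_def)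
  have "Elist P f (sorted_list_of_set X) u \<le> Elist P f (sorted_list_of_set (insert s X)) u"
  proof (cases "s \<in> X")
    case False
    have "sorted (0 # sorted_list_of_set (X - {0}))"
      using sorted_sorted_list_of_set[of X] by (simp flip: sorted_list_of_set_Cons_0[OF X(1-3)])
    moreover have "t \<in> set (sorted_list_of_set (X - {0}))" "0 < s" "s < t"
      using X insert.prems by auto
    ultimately have "Elist P f (0 # sorted_list_of_set (X - {0})) u
             \<le> Elist P f (insort s (0 # sorted_list_of_set (X - {0}))) u"
      by (intro Elist_le_insort) auto
    then show ?thesis
      using False X by (simp add: sorted_list_of_set_insert flip: sorted_list_of_set_Cons_0)
  qed (simp add: insert_absorb)
  then show ?case
    using insert by (simp add: X_def)
qed simp

lemma Epi_mono_partition: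
  assumes \<pi>: "\<pi> \<in> partitions_t t" and \<pi>': "\<pi>' \<in> partitions_t t" "\<pi> \<subseteq> \<pi>'" and t: "0 < t"
  shows "Epi P f \<pi> u \<le> Epi P f \<pi>' u"
proof -
  have "finite (\<pi>' - \<pi>)" "\<pi>' - \<pi> \<subseteq> {0<..<t}"
    using partitions_tD[OF \<pi>] partitions_tD[OF \<pi>'(1)] by (force simp: subset_iff less_le)+
  from Elist_le_union[OF \<pi> this, of u] show ?thesis
    using \<pi>' by (simp add: Epi_eq_Elist[OF \<pi> t] Epi_eq_Elist[OF \<pi>'(1) t] Un_absorb1)
qed

lemma Epi_le_vec: "\<pi> \<in> partitions_t t \<Longrightarrow> 0 < t \<Longrightarrow> u \<le> vec c \<Longrightarrow> Epi P f \<pi> u \<le> vec c"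
  by (simp add: Epi_eq_Elist Elist_le_vec)

lemma Epi_le_add_vec:
  "\<pi> \<in> partitions_t t \<Longrightarrow> 0 < t \<Longrightarrow> u \<le> v + vec c \<Longrightarrow> Epi P f \<pi> u \<le> Epi P f \<pi> v + vec c"
  by (simp add: Epi_eq_Elist Elist_le_add_vec)

lemma bdd_above_Epi: "0 < t \<Longrightarrow> bdd_above ((\<lambda>\<pi>. Epi P f \<pi> u) ` partitions_t t)"
  by (rule bdd_aboveI[where M="vec (Max (range (($) u)))"]) (auto intro: Epi_le_vec le_vec_Max)

lemma Epi_le_Nisio: "0 < t \<Longrightarrow> \<pi> \<in> partitions_t t \<Longrightarrow> Epi P f \<pi> u \<le> Nisio P f t u"
  unfolding Nisio_def by (rule cSUP_upper[OF _ bdd_above_Epi])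

lemma partitions_t_nonempty: "0 \<le> t \<Longrightarrow> partitions_t t \<noteq> {}"
  using partitions_tI[of "{0, t}" t] by auto

lemma Nisio_le_add_vec:
  assumes t: "0 < t" and uv: "u \<le> v + vec c"
  shows "Nisio P f t u \<le> Nisio P f t v + vec c"
  unfolding Nisio_def[of P f t u]
proof (rule cSUP_least)
  show "partitions_t t \<noteq> {}" using t by (simp add: partitions_t_nonempty)
  fix \<pi> assume \<pi>: "\<pi> \<in> partitions_t t"
  have "Epi P f \<pi> u \<le> Epi P f \<pi> v + vec c" by (rule Epi_le_add_vec[OF \<pi> t uv])
  also have "\<dots> \<le> Nisio P f t v + vec c" using Epi_le_Nisio[OF t \<pi>] by simp
  finally show "Epi P f \<pi> u \<le> Nisio P f t v + vec c" .
qed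

text \<open>The supremum is componentwise, so each component is approached by its own partition;
  their union approaches all components at once because refinement only increases \<open>Epi\<close>.\<close>

lemma Nisio_approx:
  assumes t: "0 < t" and e: "0 < e"
  shows "\<exists>\<pi>\<in>partitions_t t. \<forall>i. Nisio P f t u $ i - e < Epi P f \<pi> u $ i"
proof -
  have "\<exists>\<pi>\<in>partitions_t t. Nisio P f t u $ i - e < Epi P f \<pi> u $ i" for i
  proof -
    have bdd: "bdd_above ((\<lambda>\<pi>. Epi P f \<pi> u $ i) ` partitions_t t)"
      using bdd_above_image_mono[OF _ bdd_above_Epi[OF t, of u], of "\<lambda>v. v $ i"]
      by (simp add: image_comp mono_def less_eq_vec_def)
    have "Nisio P f t u $ i - e < (SUP \<pi>\<in>partitions_t t. Epi P f \<pi> u $ i)"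
      using e unfolding Nisio_def Sup_vec_def by (simp add: image_comp)
    then show ?thesis
      using less_cSUP_iff[OF partitions_t_nonempty bdd] t by simp
  qed
  then obtain p where p: "\<And>i. p i \<in> partitions_t t"
    "\<And>i. Nisio P f t u $ i - e < Epi P f (p i) u $ i"
    by metis
  have union: "(\<Union>i. p i) \<in> partitions_t t"
    using partitions_tD[OF p(1)] by (intro partitions_tI) force+
  have "Epi P f (p i) u \<le> Epi P f (\<Union>i. p i) u" for i
    by (rule Epi_mono_partition[OF p(1) union _ t]) auto
  then have "Nisio P f t u $ i - e < Epi P f (\<Union>i. p i) u $ i" for i
    using p(2)[of i] by (simp add: less_eq_vec_def) (meson less_le_trans)
  with union show ?thesis by blast
qed

lemma Nisio_Epi_gap_transfer:
  assumes \<pi>: "\<pi> \<in> partitions_t t" and t: "0 < t"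
    and gap: "\<And>i. Nisio P f t d $ i - \<delta> < Epi P f \<pi> d $ i" and near: "norm (u - d) \<le> \<delta>"
  shows "Nisio P f t u $ i - 3 * \<delta> < Epi P f \<pi> u $ i"
proof -
  have "Nisio P f t u \<le> Nisio P f t d + vec \<delta>"
    by (rule Nisio_le_add_vec[OF t le_add_vec_if_norm_diff_le[OF near]])
  moreover have "Epi P f \<pi> d \<le> Epi P f \<pi> u + vec \<delta>"
    using near by (intro Epi_le_add_vec[OF \<pi> t] le_add_vec_if_norm_diff_le) (simp add: norm_minus_commute)
  ultimately have "Nisio P f t u $ i \<le> Nisio P f t d $ i + \<delta>" "Epi P f \<pi> d $ i \<le> Epi P f \<pi> u $ i + \<delta>"
    by (simp_all add: less_eq_vec_def)
  with gap[of i] show ?thesis by linarith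
qed

lemma Epi_tendsto_Nisio:
  assumes t: "0 < t" and \<pi>s: "\<And>n. \<pi>s n \<in> partitions_t t" "incseq \<pi>s"
    and approx: "\<And>e. 0 < e \<Longrightarrow> \<exists>n. \<forall>i. Nisio P f t u $ i - e < Epi P f (\<pi>s n) u $ i"
  shows "(\<lambda>n. Epi P f (\<pi>s n) u) \<longlonglongrightarrow> Nisio P f t u"
proof (rule vec_tendstoI, rule LIMSEQ_I)
  fix i and e :: real assume "0 < e"
  then obtain n0 where n0: "Nisio P f t u $ i - e < Epi P f (\<pi>s n0) u $ i"
    using approx by blast
  have "\<bar>Epi P f (\<pi>s n) u $ i - Nisio P f t u $ i\<bar> < e" if "n0 \<le> n" for n
  proof -
    have "Epi P f (\<pi>s n0) u \<le> Epi P f (\<pi>s n) u"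
      using \<pi>s that by (intro Epi_mono_partition[OF _ _ _ t]) (auto dest: monoD)
    moreover have "Epi P f (\<pi>s n) u \<le> Nisio P f t u"
      by (rule Epi_le_Nisio[OF t \<pi>s(1)])
    ultimately have "Epi P f (\<pi>s n0) u $ i \<le> Epi P f (\<pi>s n) u $ i"
      "Epi P f (\<pi>s n) u $ i \<le> Nisio P f t u $ i"
      by (simp_all add: less_eq_vec_def)
    with n0 show ?thesis by linarith
  qed
  then show "\<exists>n0. \<forall>n\<ge>n0. norm (Epi P f (\<pi>s n) u $ i - Nisio P f t u $ i) < e"
    by auto
qed

lemma exists_partitions_Epi_tendsto_Nisio:
  assumes t: "0 < t"
  shows "\<exists>\<pi>s. (\<forall>n. \<pi>s n \<in> partitions_t t) \<and>
           (\<forall>u. incseq (\<lambda>n. Epi P f (\<pi>s n) u) \<and> (\<lambda>n. Epi P f (\<pi>s n) u) \<longlonglongrightarrow> Nisio P f t u)"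
proof -
  obtain D :: "(real^'d) set" where D: "countable D" "\<And>X. open X \<Longrightarrow> X \<noteq> {} \<Longrightarrow> \<exists>d\<in>D. d \<in> X"
    using countable_dense_exists by blast
  have "\<forall>d k. \<exists>\<pi>\<in>partitions_t t. \<forall>i. Nisio P f t d $ i - 1 / real (Suc k) < Epi P f \<pi> d $ i"
    using Nisio_approx[OF t] by simp
  then obtain \<rho> where \<rho>: "\<And>d k. \<rho> d k \<in> partitions_t t"
    "\<And>d k i. Nisio P f t d $ i - 1 / real (Suc k) < Epi P f (\<rho> d k) d $ i"
    by metis
  have "D \<noteq> {}" using D(2)[of UNIV] by auto
  then have "countable (case_prod \<rho> ` (D \<times> UNIV))" "case_prod \<rho> ` (D \<times> UNIV) \<noteq> {}"
    "case_prod \<rho> ` (D \<times> UNIV) \<subseteq> partitions_t t"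
    using D(1) \<rho>(1) by (auto intro: countable_SIGMA)
  from exists_chain_partitions_t[OF this] obtain \<pi>s where \<pi>s: "\<And>n. \<pi>s n \<in> partitions_t t" "incseq \<pi>s"
    and exhaust: "\<And>d k. d \<in> D \<Longrightarrow> \<exists>n. \<rho> d k \<subseteq> \<pi>s n"
    by blast
  have approx: "\<exists>n. \<forall>i. Nisio P f t u $ i - e < Epi P f (\<pi>s n) u $ i" if e: "0 < e" for u e
  proof -
    obtain d where d: "d \<in> D" "d \<in> ball u (e / 3)"
      using D(2)[of "ball u (e / 3)"] e by auto
    then have near: "norm (u - d) \<le> e / 3"
      by (simp add: dist_norm)
    obtain k where k: "1 / real (Suc k) < e / 3"
      using reals_Archimedean[of "e / 3"] e by (auto simp: inverse_eq_divide)
    obtain n where n: "\<rho> d k \<subseteq> \<pi>s n"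
      using exhaust[OF d(1)] by blast
    have "Epi P f (\<rho> d k) d \<le> Epi P f (\<pi>s n) d"
      by (rule Epi_mono_partition[OF \<rho>(1) \<pi>s(1) n t])
    then have "Epi P f (\<rho> d k) d $ i \<le> Epi P f (\<pi>s n) d $ i" for i
      by (simp add: less_eq_vec_def)
    then have "Nisio P f t d $ i - e / 3 < Epi P f (\<pi>s n) d $ i" for i
      using \<rho>(2)[where d=d and k=k and i=i] k by (meson diff_strict_left_mono less_le_trans less_trans)
    from Nisio_Epi_gap_transfer[OF \<pi>s(1) t this near]
    have "Nisio P f t u $ i - e < Epi P f (\<pi>s n) u $ i" for i
      by simp
    then show ?thesis by blast
  qed
  have "incseq (\<lambda>n. Epi P f (\<pi>s n) u)" for u
    by (intro monoI Epi_mono_partition[OF \<pi>s(1) \<pi>s(1) _ t] monoD[OF \<pi>s(2)])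
  then show ?thesis
    using \<pi>s Epi_tendsto_Nisio[OF t \<pi>s approx] by blast
qed

end

theorem mainTheorem6:
  fixes P :: "(real^'d^'d) set" and f :: "real^'d^'d \<Rightarrow> real^'d" and q0 :: "real^'d^'d"
    and t :: real
  assumes Q: "\<forall>q\<in>P. qmatrix q"
    and q0: "q0 \<in> P" "f q0 = 0" "(SUP q\<in>P. f q) = 0"
    and fin: "\<forall>u::real^'d. bdd_above ((\<lambda>q. q *v u + f q) ` P)"
    and t: "t > 0"
  shows "\<exists>\<pi>s :: nat \<Rightarrow> real set. (\<forall>n. \<pi>s n \<in> partitions_t t) \<and>
           (\<forall>u0::real^'d. bdd_above ((\<lambda>\<pi>. Epi P f \<pi> u0) ` partitions_t t) \<and>
              incseq (\<lambda>n. Epi P f (\<pi>s n) u0) \<and>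
              (\<lambda>n. Epi P f (\<pi>s n) u0) \<longlonglongrightarrow> Nisio P f t u0)"
proof -
  have "f q \<le> 0" if "q \<in> P" for q
    using cSUP_upper[OF that, of f] fin[rule_format, of 0] q0(3) by simp
  then interpret nisio_setting P f
    using Q q0(1) by unfold_locales auto
  obtain \<pi>s where "\<forall>n. \<pi>s n \<in> partitions_t t"
    "\<forall>u. incseq (\<lambda>n. Epi P f (\<pi>s n) u) \<and> (\<lambda>n. Epi P f (\<pi>s n) u) \<longlonglongrightarrow> Nisio P f t u"
    using exists_partitions_Epi_tendsto_Nisio[OF t] by blast
  then show ?thesis
    using bdd_above_Epi[OF t] by (intro exI[of _ \<pi>s]) simp
qed

end
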